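(* Under the setting of the context, for each $i\in\{1,\dots,K\}$ and every $\varphi\in C_c^\infty(\mathbb R^{2d})$, $$\int_{\mathbb R^{2d}}\lambda_i(x,v)\int_{\mathbb R^d}\big(\varphi(x,v')-\varphi(x,v)\big)k_i(x,v,dv')\,\mu(dx\,dv)=-\beta\int_{\mathbb R^{2d}}\varphi(x,v)\,\big(F_i(x)\cdot v\big)\,\mu(dx\,dv).$$
   Context: $\beta>0$; $M$ a symmetric positive definite $d\times d$ matrix; $U:\mathbb R^d\to\mathbb R$ smooth with $e^{-\beta U}$ integrable; $\nabla U=\sum_{i=0}^K F_i$ with $F_i:\mathbb R^d\to\mathbb R^d$ continuous and $F_i(x)\ne0$ for all $x$, $i\ge1$; $\varepsilon:\mathbb R^d\to(0,\infty)$ continuous. $\mu$ is the probability measure on $\mathbb R^{2d}$ with density proportional to $\exp(-\beta(U(x)+\frac12v^TMv))$. $(s)_+=\max(s,0)$; $G$ is standard Gaussian; $\Theta(\eta)=\mathbb E[(\eta+G)_+]$. For $i\ge1$: $\eta_i(x,v)=\varepsilon(x)\sqrt\beta\,\frac{v\cdot F_i(x)}{|M^{-1/2}F_i(x)|}$, $\lambda_i(x,v)=\frac{\sqrt\beta}{\varepsilon(x)}|M^{-1/2}F_i(x)|\Theta(\eta_i(x,v))$, and $k_i(x,v,\cdot)$ is the law of $v-\frac{2\varepsilon(x)}{\sqrt\beta(1+\varepsilon(x)^2)}(\eta_i(x,v)+\widetilde G)\frac{M^{-1}F_i(x)}{|M^{-1/2}F_i(x)|}$ where $\widetilde G$ has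 density $y\mapsto\frac{1}{\Theta(\eta)\sqrt{2\pi}}(\eta+y)_+e^{-y^2/2}$ with $\eta=\eta_i(x,v)$. *)

theory Defs
  imports "HOL-Analysis.Analysis" "HOL-Probability.Probability"
begin

fun Ck :: "nat \<Rightarrow> ('a::euclidean_space \<Rightarrow> real) \<Rightarrow> bool" where
  "Ck 0 f = continuous_on UNIV f"
| "Ck (Suc n) f = ((\<forall>x. f differentiable (at x)) \<and>
      (\<forall>b\<in>Basis. Ck n (\<lambda>x. frechet_derivative f (at x) b)))"

definition smooth_fun :: "('a::euclidean_space \<Rightarrow> real) \<Rightarrow> bool" where
  "smooth_fun f \<longleftrightarrow> (\<forall>n. Ck n f)"

definition compact_support :: "('a::euclidean_space \<Rightarrow> real) \<Rightarrow> bool" where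
  "compact_support f \<longleftrightarrow> compact (closure {z. f z \<noteq> 0})"

definition Cc_inf :: "('a::euclidean_space \<Rightarrow> real) \<Rightarrow> bool" where
  "Cc_inf f \<longleftrightarrow> smooth_fun f \<and> compact_support f"

definition sym_posdef :: "real^'n^'n \<Rightarrow> bool" where
  "sym_posdef M \<longleftrightarrow> transpose M = M \<and> (\<forall>v. v \<noteq> 0 \<longrightarrow> v \<bullet> (M *v v) > 0)"

text \<open>|M^{-1/2} w| for symmetric positive definite M, written out as
  sqrt (w^T M^{-1} w) (= |S w| for the symmetric square root S of M^{-1}).\<close>
definition norm_Minvhalf :: "real^'n^'n \<Rightarrow> real^'n \<Rightarrow> real" where
  "norm_Minvhalf M w = sqrt (w \<bullet> (matrix_inv M *v w))"

definition Theta :: "real \<Rightarrow> real" where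
  "Theta \<eta> = (\<integral>y. max (\<eta> + y) 0 * std_normal_density y \<partial>lborel)"

definition Ham :: "(real^'n \<Rightarrow> real) \<Rightarrow> real^'n^'n \<Rightarrow> (real^'n) \<times> (real^'n) \<Rightarrow> real" where
  "Ham U M z = U (fst z) + (1/2) * (snd z \<bullet> (M *v snd z))"

definition mu :: "real \<Rightarrow> (real^'n \<Rightarrow> real) \<Rightarrow> real^'n^'n \<Rightarrow> ((real^'n) \<times> (real^'n)) measure" where
  "mu \<beta> U M = density lborel (\<lambda>z. ennreal (exp (- \<beta> * Ham U M z) /
        (\<integral>w. exp (- \<beta> * Ham U M w) \<partial>lborel)))"

definition eta_i :: "real \<Rightarrow> real^'n^'n \<Rightarrow> (real^'n \<Rightarrow> real) \<Rightarrow> (real^'n \<Rightarrow> real^'n)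
    \<Rightarrow> real^'n \<Rightarrow> real^'n \<Rightarrow> real" where
  "eta_i \<beta> M \<epsilon> Fi x v = \<epsilon> x * sqrt \<beta> * (v \<bullet> Fi x) / norm_Minvhalf M (Fi x)"

definition lambda_i :: "real \<Rightarrow> real^'n^'n \<Rightarrow> (real^'n \<Rightarrow> real) \<Rightarrow> (real^'n \<Rightarrow> real^'n)
    \<Rightarrow> real^'n \<Rightarrow> real^'n \<Rightarrow> real" where
  "lambda_i \<beta> M \<epsilon> Fi x v =
     sqrt \<beta> / \<epsilon> x * norm_Minvhalf M (Fi x) * Theta (eta_i \<beta> M \<epsilon> Fi x v)"

definition Gt_density :: "real \<Rightarrow> real \<Rightarrow> real" where
  "Gt_density \<eta> y = max (\<eta> + y) 0 * exp (- (y^2) / 2) / (Theta \<eta> * sqrt (2 * pi))"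

definition k_i :: "real \<Rightarrow> real^'n^'n \<Rightarrow> (real^'n \<Rightarrow> real) \<Rightarrow> (real^'n \<Rightarrow> real^'n)
    \<Rightarrow> real^'n \<Rightarrow> real^'n \<Rightarrow> (real^'n) measure" where
  "k_i \<beta> M \<epsilon> Fi x v =
     (let \<eta> = eta_i \<beta> M \<epsilon> Fi x v in
      distr (density lborel (\<lambda>y. ennreal (Gt_density \<eta> y))) borel
        (\<lambda>y. v - ((2 * \<epsilon> x / (sqrt \<beta> * (1 + (\<epsilon> x)^2))) * (\<eta> + y)
                   / norm_Minvhalf M (Fi x)) *\<^sub>R (matrix_inv M *v Fi x)))"

end

theory Submission
  imports Defs
begin

text \<open>Fix the position \<open>x\<close> and write the jump through its Gaussian representation: with
  \<open>s = \<eta>(v) + y\<close> and \<open>y\<close> standard normal, \<open>\<lambda>\<^sub>i \<integral> (\<phi>(v') - \<phi>(v)) k\<^sub>i(dv')\<close> equals a constant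
  times \<open>\<integral> (\<phi>(v\<^sup>+) - \<phi>(v)) (s)\<^sub>+ \<gamma>(y) dy\<close>, where \<open>v\<^sup>+\<close> is the jumped velocity.
  The map \<open>T(v, y) = (v\<^sup>+, y\<^sup>+)\<close>, with \<open>y\<^sup>+\<close> chosen such that \<open>\<eta>(v\<^sup>+) + y\<^sup>+ = -s\<close>, is a
  composition of two shears and a reflection, so it preserves Lebesgue measure, and it also
  preserves the weight \<open>exp(-\<beta> v\<cdot>Mv/2) \<gamma>(y)\<close>.  Substituting \<open>T\<close> in the gain term replaces
  \<open>(s)\<^sub>+\<close> by \<open>(s)\<^sub>-\<close>, so gain minus loss integrates \<open>-s\<close>, whose Gaussian mean is \<open>-\<eta>(v)\<close>;
  after the prefactor this is \<open>-\<beta> F\<^sub>i(x)\<cdot>v\<close>.  Finally integrate over \<open>x\<close> by Fubini: both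
  integrands are dominated by the Boltzmann weight times \<open>1 + |v|\<close> on the compact
  \<open>x\<close>-support of \<open>\<phi>\<close>.\<close>

lemma integrable_gaussian_moment1_real:
  fixes c :: real
  assumes "c > 0"
  shows "integrable lborel (\<lambda>t::real. (1 + \<bar>t\<bar>) * exp (- c * t^2))"
proof -
  define \<sigma> where "\<sigma> = sqrt (1 / (2 * c))"
  have \<sigma>: "\<sigma> > 0" "\<sigma>^2 = 1 / (2 * c)" using assms by (simp_all add: \<sigma>_def)
  define C where "C = sqrt (2 * pi * \<sigma>^2)"
  have exp_eq: "exp (- c * t^2) = C * normal_density 0 \<sigma> t" for t
    using assms \<sigma> by (simp add: normal_density_def C_def field_simps)
  have "integrable lborel (\<lambda>t. C * (normal_density 0 \<sigma> t * \<bar>t - 0\<bar>^0) + C * (normal_density 0 \<sigma> t * \<bar>t - 0\<bar>^1))"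
    by (intro Bochner_Integration.integrable_add Bochner_Integration.integrable_mult_right
        integrable_normal_moment_abs \<sigma>(1))
  then show ?thesis
    by (rule Bochner_Integration.integrable_cong[THEN iffD1, rotated 2])
       (auto simp: exp_eq[simplified] algebra_simps)
qed

lemma integrable_std_normal_moment1: "integrable lborel (\<lambda>y. (1 + \<bar>y\<bar>) * std_normal_density y)"
proof -
  have "integrable lborel (\<lambda>y. std_normal_density y * \<bar>y - 0\<bar>^0 + std_normal_density y * \<bar>y - 0\<bar>^1)"
    by (intro Bochner_Integration.integrable_add integrable_normal_moment_abs) auto
  then show ?thesis by (simp add: algebra_simps)
qed

lemma one_plus_sum_le_prod_one_plus:
  fixes f :: "'b \<Rightarrow> real"
  assumes "finite I" "\<And>i. i \<in> I \<Longrightarrow> 0 \<le> f i"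
  shows "1 + (\<Sum>i\<in>I. f i) \<le> (\<Prod>i\<in>I. 1 + f i)"
  using assms
proof (induction I rule: finite_induct)
  case (insert x I)
  have "0 \<le> sum f I" "0 \<le> f x" using insert by (auto intro: sum_nonneg)
  then have "1 + sum f (insert x I) \<le> (1 + sum f I) * (1 + f x)"
    using insert by (simp add: algebra_simps)
  also have "\<dots> \<le> (\<Prod>i\<in>I. 1 + f i) * (1 + f x)"
    using insert by (intro mult_right_mono) auto
  finally show ?case using insert by (simp add: mult.commute)
qed simp

text \<open>On a Euclidean space the weight is dominated by a product of one-dimensional ones,
  since \<open>1 + |v| \<le> 2 \<Prod>\<^sub>b (1 + |v \<bullet> b|)\<close> and the Gaussian factorises over the basis.\<close>
lemma integrable_gaussian_moment1:
  fixes c :: real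
  assumes "c > 0"
  shows "integrable lborel (\<lambda>v::'a::euclidean_space. (1 + norm v) * exp (- c * (norm v)^2))"
proof (rule Bochner_Integration.integrable_bound)
  define g where "g t = (1 + \<bar>t\<bar>) * exp (- c * t^2)" for t :: real
  have g_nonneg: "0 \<le> g t" for t by (simp add: g_def)
  show "integrable lborel (\<lambda>v::'a. 2 * (\<Prod>b\<in>Basis. g (v \<bullet> b)))"
  proof (intro Bochner_Integration.integrable_mult_right integrableI_bounded)
    show "(\<lambda>v::'a. \<Prod>b\<in>Basis. g (v \<bullet> b)) \<in> borel_measurable lborel"
      unfolding g_def by measurable
    have "(\<integral>\<^sup>+ t. ennreal (g t) \<partial>lborel) < \<infinity>"
      using integrable_gaussian_moment1_real[OF assms] unfolding g_def
      by (simp add: integrable_iff_bounded abs_mult)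
    then have "(\<Prod>b\<in>(Basis::'a set). (\<integral>\<^sup>+ t. ennreal (g t) \<partial>lborel)) < \<infinity>"
      by (simp add: power_less_top_ennreal)
    also have "(\<Prod>b\<in>(Basis::'a set). (\<integral>\<^sup>+ t. ennreal (g t) \<partial>lborel))
        = (\<integral>\<^sup>+ v. (\<Prod>b\<in>Basis. ennreal (g (v \<bullet> b))) \<partial>(lborel::'a measure))"
      by (rule nn_integral_lborel_prod[symmetric]) (auto simp: g_def)
    also have "\<dots> = (\<integral>\<^sup>+ v. ennreal (norm (\<Prod>b\<in>Basis. g (v \<bullet> b))) \<partial>(lborel::'a measure))"
      by (auto intro!: nn_integral_cong simp: g_nonneg prod_nonneg abs_prod prod_ennreal)
    finally show "(\<integral>\<^sup>+ v. ennreal (norm (\<Prod>b\<in>Basis. g (v \<bullet> b))) \<partial>(lborel::'a measure)) < \<infinity>" .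
  qed
  show "(\<lambda>v::'a. (1 + norm v) * exp (- c * (norm v)^2)) \<in> borel_measurable lborel"
    by measurable
  have "(1 + norm v) * exp (- c * (norm v)^2) \<le> 2 * (\<Prod>b\<in>Basis. g (v \<bullet> b))" for v :: 'a
  proof -
    have "(norm v)^2 = (\<Sum>b\<in>Basis. (v \<bullet> b)^2)"
      unfolding power2_norm_eq_inner euclidean_inner[of v v] by (simp add: power2_eq_square)
    then have exp_prod: "exp (- c * (norm v)^2) = (\<Prod>b\<in>Basis. exp (- c * (v \<bullet> b)^2))"
      by (simp add: sum_distrib_left exp_sum[symmetric] sum_negf)
    have "norm v \<le> (\<Sum>b\<in>Basis. \<bar>v \<bullet> b\<bar>)" by (rule norm_le_l1)
    moreover have "1 + (\<Sum>b\<in>Basis. \<bar>v \<bullet> b\<bar>) \<le> (\<Prod>b\<in>Basis. 1 + \<bar>v \<bullet> b\<bar>)"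
      by (rule one_plus_sum_le_prod_one_plus) auto
    moreover have "1 \<le> (\<Prod>b\<in>(Basis::'a set). 1 + \<bar>v \<bullet> b\<bar>)"
      by (rule prod_ge_1) auto
    ultimately have "1 + norm v \<le> 2 * (\<Prod>b\<in>Basis. 1 + \<bar>v \<bullet> b\<bar>)" by linarith
    then have "(1 + norm v) * exp (- c * (norm v)^2)
        \<le> 2 * (\<Prod>b\<in>Basis. 1 + \<bar>v \<bullet> b\<bar>) * (\<Prod>b\<in>Basis. exp (- c * (v \<bullet> b)^2))"
      unfolding exp_prod by (intro mult_right_mono) (auto intro: prod_nonneg)
    then show ?thesis by (simp add: g_def prod.distrib mult.assoc)
  qed
  then show "AE v in lborel. norm ((1 + norm v) * exp (- c * (norm v)^2))
      \<le> norm (2 * (\<Prod>b\<in>(Basis::'a set). g (v \<bullet> b)))"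
    using g_nonneg by (simp add: prod_nonneg)
qed

lemma integrable_lborel_pair_mult:
  fixes f :: "'a::euclidean_space \<Rightarrow> real" and g :: "'b::euclidean_space \<Rightarrow> real"
  assumes f: "integrable lborel f" and g: "integrable lborel g"
  shows "integrable (lborel \<Otimes>\<^sub>M lborel) (\<lambda>p. f (fst p) * g (snd p))"
proof (rule lborel_pair.Fubini_integrable)
  have [measurable]: "f \<in> borel_measurable lborel" "g \<in> borel_measurable lborel"
    using f g by auto
  show "(\<lambda>p. f (fst p) * g (snd p)) \<in> borel_measurable (lborel \<Otimes>\<^sub>M lborel)" by measurable
  have "integrable lborel (\<lambda>x. \<bar>f x\<bar> * (\<integral>y. \<bar>g y\<bar> \<partial>lborel))"
    using f by (intro Bochner_Integration.integrable_mult_left) auto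
  then show "integrable lborel (\<lambda>x. \<integral>y. norm (f (fst (x, y)) * g (snd (x, y))) \<partial>lborel)"
    by (simp add: abs_mult)
  show "AE x in lborel. integrable lborel (\<lambda>y. f (fst (x, y)) * g (snd (x, y)))"
    using g by (auto intro!: Bochner_Integration.integrable_mult_right)
qed

lemma lborel_pair_distr_fibrewise_snd:
  fixes g :: "'a::euclidean_space \<Rightarrow> real \<Rightarrow> real"
  assumes meas: "(\<lambda>p. (fst p, g (fst p) (snd p))) \<in> measurable (lborel \<Otimes>\<^sub>M lborel) (lborel \<Otimes>\<^sub>M lborel)"
    and g_meas: "\<And>v. g v \<in> borel_measurable borel"
    and g_preserves: "\<And>v. distr lborel borel (g v) = lborel"
  shows "distr (lborel \<Otimes>\<^sub>M lborel) (lborel \<Otimes>\<^sub>M lborel) (\<lambda>p. (fst p, g (fst p) (snd p)))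
         = (lborel \<Otimes>\<^sub>M lborel :: ('a \<times> real) measure)"
proof (rule measure_eqI)
  let ?S = "\<lambda>p. (fst p, g (fst p) (snd p))"
  fix A assume "A \<in> sets (distr (lborel \<Otimes>\<^sub>M lborel) (lborel \<Otimes>\<^sub>M lborel) ?S)"
  then have A: "A \<in> sets (lborel \<Otimes>\<^sub>M lborel :: ('a \<times> real) measure)" by simp
  have g_meas': "g v \<in> measurable lborel borel" for v using g_meas[of v] by simp
  have fibre: "Pair v -` A \<in> sets (borel :: real measure)" for v
    using sets_Pair1[OF A, of v] by simp
  have "emeasure (distr (lborel \<Otimes>\<^sub>M lborel) (lborel \<Otimes>\<^sub>M lborel) ?S) A
      = (\<integral>\<^sup>+ v. emeasure lborel (Pair v -` (?S -` A \<inter> space (lborel \<Otimes>\<^sub>M lborel))) \<partial>lborel)"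
    by (simp add: emeasure_distr[OF meas A] lborel.emeasure_pair_measure_alt[OF measurable_sets[OF meas A]])
  also have "\<dots> = (\<integral>\<^sup>+ v. emeasure (distr lborel borel (g v)) (Pair v -` A) \<partial>lborel)"
  proof (rule nn_integral_cong)
    fix v :: 'a
    have "Pair v -` (?S -` A \<inter> space (lborel \<Otimes>\<^sub>M lborel)) = g v -` (Pair v -` A) \<inter> space lborel"
      by (auto simp: space_pair_measure)
    then show "emeasure lborel (Pair v -` (?S -` A \<inter> space (lborel \<Otimes>\<^sub>M lborel)))
        = emeasure (distr lborel borel (g v)) (Pair v -` A)"
      by (simp add: emeasure_distr[OF g_meas' fibre])
  qed
  also have "\<dots> = emeasure (lborel \<Otimes>\<^sub>M lborel) A"
    by (simp add: g_preserves lborel.emeasure_pair_measure_alt[OF A])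
  finally show "emeasure (distr (lborel \<Otimes>\<^sub>M lborel) (lborel \<Otimes>\<^sub>M lborel) ?S) A
      = emeasure (lborel \<Otimes>\<^sub>M lborel) A" .
qed simp

lemma lborel_pair_distr_fibrewise_fst:
  fixes h :: "real \<Rightarrow> 'a::euclidean_space \<Rightarrow> 'a"
  assumes meas: "(\<lambda>p. (h (snd p) (fst p), snd p)) \<in> measurable (lborel \<Otimes>\<^sub>M lborel) (lborel \<Otimes>\<^sub>M lborel)"
    and h_meas: "\<And>y. h y \<in> borel_measurable borel"
    and h_preserves: "\<And>y. distr lborel borel (h y) = lborel"
  shows "distr (lborel \<Otimes>\<^sub>M lborel) (lborel \<Otimes>\<^sub>M lborel) (\<lambda>p. (h (snd p) (fst p), snd p))
         = (lborel \<Otimes>\<^sub>M lborel :: ('a \<times> real) measure)"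
proof (rule measure_eqI)
  let ?S = "\<lambda>p. (h (snd p) (fst p), snd p)"
  fix A assume "A \<in> sets (distr (lborel \<Otimes>\<^sub>M lborel) (lborel \<Otimes>\<^sub>M lborel) ?S)"
  then have A: "A \<in> sets (lborel \<Otimes>\<^sub>M lborel :: ('a \<times> real) measure)" by simp
  have h_meas': "h y \<in> measurable lborel borel" for y using h_meas[of y] by simp
  have fibre: "(\<lambda>x. (x, y)) -` A \<in> sets (borel :: 'a measure)" for y
    using sets_Pair2[OF A, of y] by simp
  have "emeasure (distr (lborel \<Otimes>\<^sub>M lborel) (lborel \<Otimes>\<^sub>M lborel) ?S) A
      = (\<integral>\<^sup>+ y. emeasure lborel ((\<lambda>x. (x, y)) -` (?S -` A \<inter> space (lborel \<Otimes>\<^sub>M lborel))) \<partial>lborel)"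
    by (simp add: emeasure_distr[OF meas A]
        lborel_pair.emeasure_pair_measure_alt2[OF measurable_sets[OF meas A]])
  also have "\<dots> = (\<integral>\<^sup>+ y. emeasure (distr lborel borel (h y)) ((\<lambda>x. (x, y)) -` A) \<partial>lborel)"
  proof (rule nn_integral_cong)
    fix y :: real
    have "(\<lambda>x. (x, y)) -` (?S -` A \<inter> space (lborel \<Otimes>\<^sub>M lborel)) = h y -` ((\<lambda>x. (x, y)) -` A) \<inter> space lborel"
      by (auto simp: space_pair_measure)
    then show "emeasure lborel ((\<lambda>x. (x, y)) -` (?S -` A \<inter> space (lborel \<Otimes>\<^sub>M lborel)))
        = emeasure (distr lborel borel (h y)) ((\<lambda>x. (x, y)) -` A)"
      by (simp add: emeasure_distr[OF h_meas' fibre])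
  qed
  also have "\<dots> = emeasure (lborel \<Otimes>\<^sub>M lborel) A"
    by (simp add: h_preserves lborel_pair.emeasure_pair_measure_alt2[OF A])
  finally show "emeasure (distr (lborel \<Otimes>\<^sub>M lborel) (lborel \<Otimes>\<^sub>M lborel) ?S) A
      = emeasure (lborel \<Otimes>\<^sub>M lborel) A" .
qed simp

lemma lborel_distr_plus_right: "distr lborel borel (\<lambda>v. v + u) = (lborel :: 'a::euclidean_space measure)"
proof -
  have "(\<lambda>v. v + u) = (+) u" by (rule ext) (simp add: add.commute)
  then show ?thesis using lborel_distr_plus[of u] by simp
qed

lemma matrix_vector_mult_borel_measurable[measurable]:
  "((*v) (A::real^'n^'m)) \<in> borel_measurable borel"
  by (intro borel_measurable_continuous_onI linear_continuous_on matrix_vector_mul_bounded_linear)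

lemma sym_posdef_inner_commute:
  fixes M :: "real^'n^'n"
  assumes "sym_posdef M"
  shows "(M *v u) \<bullet> v = u \<bullet> (M *v v)"
  using assms unfolding sym_posdef_def
  by (metis dot_lmul_matrix inner_commute vector_transpose_matrix)

lemma sym_posdef_matrix_inv:
  fixes M :: "real^'n^'n"
  assumes "sym_posdef M"
  shows "M *v (matrix_inv M *v u) = u"
proof -
  have "x = 0" if "M *v x = 0" for x
    using that assms by (auto simp: sym_posdef_def)
  then have "invertible M"
    using matrix_left_invertible_ker invertible_left_inverse by blast
  then have "M ** matrix_inv M = mat 1"
    unfolding invertible_def matrix_inv_def
    by (rule someI_ex[where P = "\<lambda>A'. M ** A' = mat 1 \<and> A' ** M = mat 1", THEN conjunct1])
  then show ?thesis
    by (metis matrix_vector_mul_assoc matrix_vector_mul_lid)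
qed

lemma sym_posdef_inv_quadratic_pos:
  fixes M :: "real^'n^'n"
  assumes "sym_posdef M" "F \<noteq> 0"
  shows "F \<bullet> (matrix_inv M *v F) > 0"
proof -
  let ?w = "matrix_inv M *v F"
  have Mw: "M *v ?w = F" by (rule sym_posdef_matrix_inv[OF assms(1)])
  then have "?w \<noteq> 0" using assms(2) by auto
  then have "?w \<bullet> (M *v ?w) > 0" using assms(1) by (auto simp: sym_posdef_def)
  then show ?thesis using Mw by (simp add: inner_commute)
qed

lemma sym_posdef_coercive:
  fixes M :: "real^'n^'n"
  assumes "sym_posdef M"
  obtains m where "m > 0" "\<And>v. m * (norm v)^2 \<le> v \<bullet> (M *v v)"
proof -
  have cont: "continuous_on (sphere 0 1) (\<lambda>v::real^'n. v \<bullet> (M *v v))"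
    by (intro continuous_intros linear_continuous_on matrix_vector_mul_bounded_linear)
  obtain u where u: "u \<in> sphere 0 1"
    and u_min: "\<And>v. v \<in> sphere 0 1 \<Longrightarrow> u \<bullet> (M *v u) \<le> v \<bullet> (M *v v)"
    using continuous_attains_inf[OF compact_sphere _ cont] by force
  define m where "m = u \<bullet> (M *v u)"
  have "u \<noteq> 0" using u by auto
  then have "m > 0" using assms by (auto simp: sym_posdef_def m_def)
  moreover have "m * (norm v)^2 \<le> v \<bullet> (M *v v)" for v
  proof (cases "v = 0")
    case False
    define z where "z = (1 / norm v) *\<^sub>R v"
    have "z \<in> sphere 0 1" using False by (simp add: z_def)
    then have "m \<le> z \<bullet> (M *v z)" using u_min by (simp add: m_def)
    moreover have "v \<bullet> (M *v v) = (norm v)^2 * (z \<bullet> (M *v z))"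
      using False by (simp add: z_def matrix_vector_mult_scaleR power2_eq_square)
    ultimately show ?thesis by (metis mult_right_mono zero_le_power2 mult.commute)
  qed simp
  ultimately show ?thesis using that by blast
qed
lemma Theta_integrand_integrable:
  "integrable lborel (\<lambda>y. max (\<eta> + y) 0 * std_normal_density y)"
proof (rule Bochner_Integration.integrable_bound)
  show "integrable lborel (\<lambda>y. (\<bar>\<eta>\<bar> + 1) * ((1 + \<bar>y\<bar>) * std_normal_density y))"
    by (intro Bochner_Integration.integrable_mult_right integrable_std_normal_moment1)
  have "max (\<eta> + y) 0 \<le> (\<bar>\<eta>\<bar> + 1) * (1 + \<bar>y\<bar>)" for y
  proof -
    have "0 \<le> \<bar>\<eta>\<bar> * \<bar>y\<bar>" by simp
    then show ?thesis by (simp add: algebra_simps, linarith)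
  qed
  then show "AE y in lborel. norm (max (\<eta> + y) 0 * std_normal_density y)
      \<le> norm ((\<bar>\<eta>\<bar> + 1) * ((1 + \<bar>y\<bar>) * std_normal_density y))"
    by (auto simp: abs_mult mult.assoc[symmetric] intro!: mult_right_mono)
qed simp

lemma Theta_pos: "Theta \<eta> > 0"
proof -
  have nonneg: "AE y in lborel. 0 \<le> max (\<eta> + y) 0 * std_normal_density y" by simp
  have "Theta \<eta> \<noteq> 0"
  proof
    assume "Theta \<eta> = 0"
    then have "AE y in lborel. max (\<eta> + y) 0 * std_normal_density y = 0"
      using integral_nonneg_eq_0_iff_AE[OF Theta_integrand_integrable nonneg] by (simp add: Theta_def)
    moreover have "y \<notin> {- \<eta> <..< - \<eta> + 1}" if "max (\<eta> + y) 0 * std_normal_density y = 0" for y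
      using that normal_density_pos[of 1 0 y] by (auto simp: max_def split: if_splits)
    ultimately have "AE y in lborel. y \<notin> {- \<eta> <..< - \<eta> + 1}"
      by (elim eventually_mono) blast
    then have "emeasure lborel {- \<eta> <..< - \<eta> + 1} = 0"
      by (subst (asm) AE_iff_measurable[of "{- \<eta> <..< - \<eta> + 1}"]) auto
    then show False by simp
  qed
  moreover have "Theta \<eta> \<ge> 0" unfolding Theta_def by (rule integral_nonneg_AE[OF nonneg])
  ultimately show ?thesis by simp
qed

lemma Theta_mult_Gt_density: "Theta \<eta> * Gt_density \<eta> y = max (\<eta> + y) 0 * std_normal_density y"
  using Theta_pos[of \<eta>] by (simp add: Gt_density_def std_normal_density_def)

definition maxwellian :: "real \<Rightarrow> real^'n^'n \<Rightarrow> real^'n \<Rightarrow> real" where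
  "maxwellian \<beta> M v = exp (- \<beta> * ((1/2) * (v \<bullet> (M *v v))))"

lemma maxwellian_pos: "maxwellian \<beta> M v > 0"
  by (simp add: maxwellian_def)

lemma maxwellian_borel_measurable[measurable]: "maxwellian \<beta> M \<in> borel_measurable borel"
  unfolding maxwellian_def by measurable

lemma Ham_split: "exp (- \<beta> * Ham U M (x, v)) = exp (- \<beta> * U x) * maxwellian \<beta> M v"
  by (simp add: Ham_def maxwellian_def exp_add[symmetric] algebra_simps)

lemma integrable_maxwellian_moment1:
  assumes "\<beta> > 0" "sym_posdef M"
  shows "integrable lborel (\<lambda>v. (1 + norm v) * maxwellian \<beta> M v)"
proof -
  obtain m where m: "m > 0" "\<And>v. m * (norm v)^2 \<le> v \<bullet> (M *v v)"
    using sym_posdef_coercive[OF assms(2)] by blast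
  have "maxwellian \<beta> M v \<le> exp (- (\<beta> * m / 2) * (norm v)^2)" for v
    unfolding maxwellian_def using m(2)[of v] assms(1) by (simp add: mult_left_mono)
  moreover have "\<beta> * m / 2 > 0" using m(1) assms(1) by simp
  ultimately show ?thesis
    by (intro Bochner_Integration.integrable_bound[OF integrable_gaussian_moment1[of "\<beta> * m / 2"]])
       (auto intro!: mult_left_mono simp: abs_mult maxwellian_pos less_imp_le)
qed

definition jump :: "real \<Rightarrow> real^'n^'n \<Rightarrow> (real^'n \<Rightarrow> real) \<Rightarrow> (real^'n \<Rightarrow> real^'n)
    \<Rightarrow> real^'n \<Rightarrow> real^'n \<Rightarrow> real \<Rightarrow> real^'n" where
  "jump \<beta> M \<epsilon> Fi x v y = v - ((2 * \<epsilon> x / (sqrt \<beta> * (1 + (\<epsilon> x)^2))) * (eta_i \<beta> M \<epsilon> Fi x v + y)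
       / norm_Minvhalf M (Fi x)) *\<^sub>R (matrix_inv M *v Fi x)"

lemma k_i_eq_distr_jump:
  "k_i \<beta> M \<epsilon> Fi x v
   = distr (density lborel (\<lambda>y. ennreal (Gt_density (eta_i \<beta> M \<epsilon> Fi x v) y))) borel (jump \<beta> M \<epsilon> Fi x v)"
  unfolding k_i_def Let_def jump_def[abs_def] by simp

locale velocity_jump =
  fixes \<beta> :: real and M :: "real^'n^'n" and \<epsilon> :: "real^'n \<Rightarrow> real"
    and Fi :: "real^'n \<Rightarrow> real^'n" and x :: "real^'n"
  assumes beta_pos: "\<beta> > 0" and M_spd: "sym_posdef M"
    and eps_pos: "\<epsilon> x > 0" and F_nonzero: "Fi x \<noteq> 0"
begin

abbreviation "e \<equiv> \<epsilon> x"
abbreviation "F0 \<equiv> Fi x"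
abbreviation "a \<equiv> norm_Minvhalf M F0"
abbreviation "eta \<equiv> eta_i \<beta> M \<epsilon> Fi x"
abbreviation "move \<equiv> jump \<beta> M \<epsilon> Fi x"
abbreviation "rho \<equiv> maxwellian \<beta> M"

definition "w = matrix_inv M *v F0"
definition "c = 2 * e / (sqrt \<beta> * (1 + e^2))"
definition "q = 2 * e / (1 + e^2)"

lemma M_w: "M *v w = F0"
  unfolding w_def by (rule sym_posdef_matrix_inv[OF M_spd])

lemma M_inner_commute: "(M *v u) \<bullet> v = u \<bullet> (M *v v)"
  by (rule sym_posdef_inner_commute[OF M_spd])

lemma F0_inner_w_pos: "F0 \<bullet> w > 0"
  unfolding w_def by (rule sym_posdef_inv_quadratic_pos[OF M_spd F_nonzero])

lemma a_pos: "a > 0"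
  using F0_inner_w_pos by (simp add: norm_Minvhalf_def w_def)

lemma F0_inner_w: "F0 \<bullet> w = a^2"
  using F0_inner_w_pos by (simp add: norm_Minvhalf_def w_def)

lemma w_inner_F0: "w \<bullet> F0 = a^2"
  using F0_inner_w by (simp add: inner_commute)

lemma sqrt_beta_pos: "sqrt \<beta> > 0"
  using beta_pos by simp

lemma q_eq: "q = sqrt \<beta> * c"
  using sqrt_beta_pos by (simp add: q_def c_def)

lemma q_one_plus_e_sq: "q * (1 + e^2) = 2 * e"
proof -
  have "(1::real) + e^2 > 0" by (simp add: add_pos_nonneg)
  then show ?thesis by (simp add: q_def)
qed

lemma eta_eq: "eta v = e * sqrt \<beta> * (v \<bullet> F0) / a"
  by (simp add: eta_i_def)

lemma move_eq: "move v y = v - (c * (eta v + y) / a) *\<^sub>R w"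
  by (simp add: jump_def c_def w_def)

lemma inner_diff_w: "(v - d *\<^sub>R w) \<bullet> F0 = v \<bullet> F0 - d * a^2"
  by (simp add: inner_diff_left w_inner_F0)

lemma quadratic_add_w:
  "(v + d *\<^sub>R w) \<bullet> (M *v (v + d *\<^sub>R w)) = v \<bullet> (M *v v) + 2 * d * (v \<bullet> F0) + d^2 * a^2"
proof -
  have "w \<bullet> (M *v v) = v \<bullet> F0" "v \<bullet> (M *v w) = v \<bullet> F0"
    using M_inner_commute[of w v] M_w by (simp_all add: inner_commute)
  then show ?thesis
    by (simp add: matrix_vector_mult_scaleR M_w F0_inner_w inner_commute power2_eq_square
        algebra_simps)
qed

lemma eta_move: "eta (move v y) = eta v - e * q * (eta v + y)"
proof -
  have "eta (move v y) = e * sqrt \<beta> * ((v - (c * (eta v + y) / a) *\<^sub>R w) \<bullet> F0) / a"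
    by (simp only: move_eq eta_eq)
  also have "\<dots> = e * sqrt \<beta> * (v \<bullet> F0) / a - e * (sqrt \<beta> * c) * (eta v + y)"
    using a_pos by (simp add: inner_diff_w field_simps power2_eq_square)
  finally show ?thesis by (simp add: q_eq eta_eq algebra_simps)
qed

text \<open>\<open>T\<close> sends \<open>(v, y)\<close> to the jumped velocity together with the Gaussian variable that
  makes the jump from there land back at \<open>v\<close>; it reverses the sign of \<open>s = \<eta>(v) + y\<close>.\<close>
definition "T p = (move (fst p) (snd p), - (eta (fst p) + snd p) - eta (move (fst p) (snd p)))"
definition "shear_v p = (fst p + (- e * snd p / (sqrt \<beta> * a)) *\<^sub>R w, snd p)"
definition "shear_y p = (fst p, snd p + q * (sqrt \<beta> * (fst p \<bullet> F0) / a))"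
definition "reflect_y p = (fst p, - snd (p::(real^'n) \<times> real))"
definition "gauss_weight p = rho (fst p) * std_normal_density (snd p)"

lemma T_fst: "fst (T p) = move (fst p) (snd p)"
  by (simp add: T_def)

lemma T_snd: "eta (fst (T p)) + snd (T p) = - (eta (fst p) + snd p)"
  by (simp add: T_def)

lemma T_eq_shears: "T = reflect_y \<circ> shear_v \<circ> shear_y \<circ> shear_v"
proof
  fix p :: "(real^'n) \<times> real"
  obtain v y where p: "p = (v, y)" by (cases p)
  define u where "u = sqrt \<beta> * (v \<bullet> F0) / a"
  define y2 where "y2 = y + q * (u - e * y)"
  have eta_v: "eta v = e * u" by (simp add: eta_eq u_def)
  have q_e: "q + q * e^2 = 2 * e" using q_one_plus_e_sq by (simp add: algebra_simps)
  have "sqrt \<beta> * ((v - (e * y / (sqrt \<beta> * a)) *\<^sub>R w) \<bullet> F0) / a = u - e * y"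
    using a_pos sqrt_beta_pos by (simp add: inner_diff_w u_def field_simps power2_eq_square)
  then have shears: "(shear_v \<circ> shear_y \<circ> shear_v) p
      = (v + (- e * y / (sqrt \<beta> * a)) *\<^sub>R w + (- e * y2 / (sqrt \<beta> * a)) *\<^sub>R w, y2)"
    by (simp add: p shear_v_def shear_y_def y2_def)
  have "y * (q + q * e^2) = y * (2 * e)" using q_e by simp
  then have H: "e * (y + y2) = sqrt \<beta> * c * (e * u + y)"
    unfolding y2_def q_eq[symmetric] by (simp add: algebra_simps power2_eq_square)
  have "- e * y / (sqrt \<beta> * a) + - e * y2 / (sqrt \<beta> * a) = - (e * (y + y2)) / (sqrt \<beta> * a)"
    by (simp add: add_divide_distrib[symmetric] algebra_simps)
  also have "\<dots> = - (c * (eta v + y) / a)"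
    using a_pos sqrt_beta_pos by (simp add: H eta_v)
  finally have coef: "- e * y / (sqrt \<beta> * a) + - e * y2 / (sqrt \<beta> * a) = - (c * (eta v + y) / a)" .
  have "move v y = v + (- e * y / (sqrt \<beta> * a) + - e * y2 / (sqrt \<beta> * a)) *\<^sub>R w"
    unfolding coef by (simp add: move_eq)
  then have move_v: "move v y = v + (- e * y / (sqrt \<beta> * a)) *\<^sub>R w + (- e * y2 / (sqrt \<beta> * a)) *\<^sub>R w"
    by (simp add: scaleR_add_left scaleR_diff_left algebra_simps)
  have "u * (q + q * e^2) = u * (2 * e)" using q_e by simp
  then have "- (eta v + y) - eta (move v y) = - y2"
    by (simp add: eta_move eta_v y2_def algebra_simps power2_eq_square)
  then have "T p = (move v y, - y2)" by (simp add: T_def p)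
  then show "T p = (reflect_y \<circ> shear_v \<circ> shear_y \<circ> shear_v) p"
    using shears by (simp add: reflect_y_def move_v)
qed

lemma gauss_weight_T: "gauss_weight (T p) = gauss_weight p"
proof -
  obtain v y where p: "p = (v, y)" by (cases p)
  define u where "u = sqrt \<beta> * (v \<bullet> F0) / a"
  define s where "s = eta v + y"
  have eta_v: "eta v = e * u" by (simp add: eta_eq u_def)
  have quad: "move v y \<bullet> (M *v move v y) = v \<bullet> (M *v v) - 2 * (c * s / a) * (v \<bullet> F0) + (c * s / a)^2 * a^2"
    using quadratic_add_w[of v "- (c * s / a)"] by (simp add: move_eq s_def)
  have rescale: "(b * b) * V - 2 * (b * b) * (c * s / a) * P + (b * b) * (c * s / a)^2 * a^2
      = (b * b) * V - 2 * (b * c) * (b * P / a) * s + (b * c)^2 * s^2" for b V P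
    using a_pos by (simp add: field_simps power2_eq_square)
  have "\<beta> * (move v y \<bullet> (M *v move v y)) = (sqrt \<beta> * sqrt \<beta>) * (v \<bullet> (M *v v))
      - 2 * (sqrt \<beta> * sqrt \<beta>) * (c * s / a) * (v \<bullet> F0) + (sqrt \<beta> * sqrt \<beta>) * (c * s / a)^2 * a^2"
    using beta_pos by (simp add: quad algebra_simps)
  then have "\<beta> * (move v y \<bullet> (M *v move v y)) = \<beta> * (v \<bullet> (M *v v)) - 2 * q * u * s + q^2 * s^2"
    unfolding rescale q_eq u_def using beta_pos by simp
  moreover have "- 2 * q * u * s + q^2 * s^2 + (- s - e * (u - q * s))^2 = (s - e * u)^2"
  proof -
    have "- 2 * q * u * s + q^2 * s^2 + (- s - e * (u - q * s))^2 - (s - e * u)^2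
        = (2 * e - e^2 * q - q) * (2 * u * s - q * s^2)"
      by (simp add: algebra_simps power2_eq_square)
    also have "2 * e - e^2 * q - q = 0" using q_one_plus_e_sq by (simp add: algebra_simps)
    finally show ?thesis by simp
  qed
  moreover have "y = s - e * u" by (simp add: s_def eta_v)
  ultimately have energy: "\<beta> * (move v y \<bullet> (M *v move v y)) + (- s - e * (u - q * s))^2
      = \<beta> * (v \<bullet> (M *v v)) + y^2"
    by simp
  have "- (eta v + y) - eta (move v y) = - s - e * (u - q * s)"
    by (simp add: eta_move s_def eta_v algebra_simps)
  then have "gauss_weight (T p) = maxwellian \<beta> M (move v y) * std_normal_density (- s - e * (u - q * s))"
    by (simp add: gauss_weight_def T_def p)
  also have "\<dots> = exp (- (\<beta> * (move v y \<bullet> (M *v move v y)) + (- s - e * (u - q * s))^2) / 2) / sqrt (2 * pi)"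
    by (simp add: maxwellian_def std_normal_density_def exp_add[symmetric] field_simps)
  also have "\<dots> = gauss_weight p"
    by (simp only: energy) (simp add: gauss_weight_def p maxwellian_def std_normal_density_def
        exp_add[symmetric] field_simps)
  finally show ?thesis .
qed

abbreviation "N \<equiv> (lborel \<Otimes>\<^sub>M lborel :: ((real^'n) \<times> real) measure)"

lemma shear_v_measurable: "shear_v \<in> measurable N N" unfolding shear_v_def by measurable
lemma shear_y_measurable: "shear_y \<in> measurable N N" unfolding shear_y_def by measurable
lemma reflect_y_measurable: "reflect_y \<in> measurable N N" unfolding reflect_y_def by measurable

lemma distr_shear_v: "distr N N shear_v = N"
proof -
  have eq: "shear_v = (\<lambda>p. ((\<lambda>y v. v + (- e * y / (sqrt \<beta> * a)) *\<^sub>R w) (snd p) (fst p), snd p))"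
    by (simp add: shear_v_def fun_eq_iff)
  show ?thesis unfolding eq
  proof (rule lborel_pair_distr_fibrewise_fst)
    show "distr lborel borel (\<lambda>v. v + (- e * y / (sqrt \<beta> * a)) *\<^sub>R w) = lborel" for y
      by (rule lborel_distr_plus_right)
  qed (use shear_v_measurable eq in auto)
qed

lemma distr_shear_y: "distr N N shear_y = N"
proof -
  have eq: "shear_y = (\<lambda>p. (fst p, (\<lambda>v y. y + q * (sqrt \<beta> * (v \<bullet> F0) / a)) (fst p) (snd p)))"
    by (simp add: shear_y_def fun_eq_iff)
  show ?thesis unfolding eq
  proof (rule lborel_pair_distr_fibrewise_snd)
    show "distr lborel borel (\<lambda>y. y + q * (sqrt \<beta> * (v \<bullet> F0) / a)) = lborel" for v
      by (rule lborel_distr_plus_right)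
  qed (use shear_y_measurable eq in auto)
qed

lemma distr_reflect_y: "distr N N reflect_y = N"
proof -
  have eq: "reflect_y = (\<lambda>p. (fst p, (\<lambda>v y. - y) (fst p) (snd p)))"
    by (simp add: reflect_y_def fun_eq_iff)
  show ?thesis unfolding eq
    by (rule lborel_pair_distr_fibrewise_snd)
       (use reflect_y_measurable eq lborel_distr_uminus in \<open>auto simp: fun_eq_iff\<close>)
qed

lemma T_measurable: "T \<in> measurable N N"
  unfolding T_eq_shears using shear_v_measurable shear_y_measurable reflect_y_measurable
  by (intro measurable_comp) auto

lemma integral_T:
  fixes f :: "(real^'n) \<times> real \<Rightarrow> real"
  assumes "f \<in> borel_measurable N"
  shows "integral\<^sup>L N (\<lambda>p. f (T p)) = integral\<^sup>L N f"
proof -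
  have "distr N N T = distr (distr (distr (distr N N shear_v) N shear_y) N shear_v) N reflect_y"
    using shear_v_measurable shear_y_measurable reflect_y_measurable
    by (simp add: T_eq_shears distr_distr measurable_comp comp_assoc)
  then have "distr N N T = N" by (simp add: distr_shear_v distr_shear_y distr_reflect_y)
  then show ?thesis using integral_distr[OF T_measurable assms] by simp
qed

lemma gauss_weight_nonneg: "gauss_weight p \<ge> 0"
  by (simp add: gauss_weight_def maxwellian_pos less_imp_le)

lemma gauss_weight_measurable[measurable]: "gauss_weight \<in> borel_measurable N"
  unfolding gauss_weight_def by measurable

lemma eta_measurable[measurable]: "eta \<in> borel_measurable borel"
  unfolding eta_i_def by measurable

lemma move_measurable[measurable]: "(\<lambda>p. move (fst p) (snd p)) \<in> borel_measurable N"
  unfolding jump_def eta_i_def by measurable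

lemma abs_eta_le: "\<bar>eta v\<bar> \<le> (e * sqrt \<beta> * norm F0 / a) * norm v"
proof -
  have "\<bar>v \<bullet> F0\<bar> \<le> norm v * norm F0" by (rule Cauchy_Schwarz_ineq2)
  then show ?thesis using a_pos eps_pos beta_pos
    by (simp add: eta_eq abs_mult divide_right_mono mult_left_mono field_simps)
qed

lemma integrable_gauss_weight_moment:
  "integrable N (\<lambda>p. gauss_weight p * (\<bar>eta (fst p)\<bar> + \<bar>snd p\<bar>))"
proof (rule Bochner_Integration.integrable_bound)
  define C where "C = e * sqrt \<beta> * norm F0 / a"
  have C: "C \<ge> 0" using a_pos eps_pos beta_pos by (simp add: C_def)
  show "integrable N (\<lambda>p. (C + 1) * (((1 + norm (fst p)) * rho (fst p))
      * ((1 + \<bar>snd p\<bar>) * std_normal_density (snd p))))"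
    by (intro Bochner_Integration.integrable_mult_right integrable_lborel_pair_mult
        integrable_maxwellian_moment1 integrable_std_normal_moment1 beta_pos M_spd)
  have "\<bar>eta v\<bar> + \<bar>y\<bar> \<le> (C + 1) * ((1 + norm v) * (1 + \<bar>y\<bar>))" for v y
  proof -
    have v_le: "norm v \<le> (1 + norm v) * (1 + \<bar>y\<bar>)" and y_le: "\<bar>y\<bar> \<le> (1 + norm v) * (1 + \<bar>y\<bar>)"
      using mult_nonneg_nonneg[OF norm_ge_zero abs_ge_zero, of v y] by (simp_all add: algebra_simps)
    have "\<bar>eta v\<bar> \<le> C * norm v" using abs_eta_le[of v] by (simp add: C_def)
    also have "\<dots> \<le> C * ((1 + norm v) * (1 + \<bar>y\<bar>))" using v_le C by (rule mult_left_mono)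
    finally have "\<bar>eta v\<bar> + \<bar>y\<bar> \<le> C * ((1 + norm v) * (1 + \<bar>y\<bar>)) + (1 + norm v) * (1 + \<bar>y\<bar>)"
      using y_le by (rule add_mono)
    then show ?thesis by (simp add: distrib_right)
  qed
  then have bound: "gauss_weight p * (\<bar>eta (fst p)\<bar> + \<bar>snd p\<bar>)
      \<le> gauss_weight p * ((C + 1) * ((1 + norm (fst p)) * (1 + \<bar>snd p\<bar>)))" for p
    using gauss_weight_nonneg by (intro mult_left_mono) auto
  show "AE p in N. norm (gauss_weight p * (\<bar>eta (fst p)\<bar> + \<bar>snd p\<bar>))
      \<le> norm ((C + 1) * (((1 + norm (fst p)) * rho (fst p)) * ((1 + \<bar>snd p\<bar>) * std_normal_density (snd p))))"
  proof (rule AE_I2)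
    fix p
    have "norm (gauss_weight p * (\<bar>eta (fst p)\<bar> + \<bar>snd p\<bar>))
        \<le> gauss_weight p * ((C + 1) * ((1 + norm (fst p)) * (1 + \<bar>snd p\<bar>)))"
      using bound[of p] gauss_weight_nonneg[of p] by simp
    also have "\<dots> = (C + 1) * (((1 + norm (fst p)) * rho (fst p)) * ((1 + \<bar>snd p\<bar>) * std_normal_density (snd p)))"
      by (simp add: gauss_weight_def mult_ac)
    finally show "norm (gauss_weight p * (\<bar>eta (fst p)\<bar> + \<bar>snd p\<bar>))
        \<le> norm ((C + 1) * (((1 + norm (fst p)) * rho (fst p)) * ((1 + \<bar>snd p\<bar>) * std_normal_density (snd p))))"
      by simp
  qed
qed simp

lemma integrable_dominated_by_gauss_weight:
  fixes f :: "(real^'n) \<times> real \<Rightarrow> real"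
  assumes "f \<in> borel_measurable N"
    and "\<And>p. \<bar>f p\<bar> \<le> B * (gauss_weight p * (\<bar>eta (fst p)\<bar> + \<bar>snd p\<bar>))"
  shows "integrable N f"
proof (rule Bochner_Integration.integrable_bound[OF _ assms(1)])
  show "integrable N (\<lambda>p. B * (gauss_weight p * (\<bar>eta (fst p)\<bar> + \<bar>snd p\<bar>)))"
    by (intro Bochner_Integration.integrable_mult_right integrable_gauss_weight_moment)
  show "AE p in N. norm (f p) \<le> norm (B * (gauss_weight p * (\<bar>eta (fst p)\<bar> + \<bar>snd p\<bar>)))"
    using assms(2) by (intro AE_I2) (simp add: order_trans[OF _ abs_ge_self])
qed

lemma jump_term_eq:
  fixes \<psi> :: "real^'n \<Rightarrow> real"
  assumes [measurable]: "\<psi> \<in> borel_measurable borel"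
  shows "lambda_i \<beta> M \<epsilon> Fi x v * (\<integral>v'. \<psi> v' - \<psi> v \<partial>k_i \<beta> M \<epsilon> Fi x v)
       = sqrt \<beta> / e * a * (\<integral>y. (\<psi> (move v y) - \<psi> v) * (max (eta v + y) 0 * std_normal_density y) \<partial>lborel)"
proof -
  have [measurable]: "move v \<in> borel_measurable borel"
    unfolding jump_def by measurable
  have [measurable]: "Gt_density (eta v) \<in> borel_measurable lborel"
    unfolding Gt_density_def by measurable
  have "(\<integral>v'. \<psi> v' - \<psi> v \<partial>k_i \<beta> M \<epsilon> Fi x v)
      = (\<integral>y. \<psi> (move v y) - \<psi> v \<partial>density lborel (\<lambda>y. ennreal (Gt_density (eta v) y)))"
    unfolding k_i_eq_distr_jump by (rule integral_distr) auto
  also have "\<dots> = (\<integral>y. Gt_density (eta v) y * (\<psi> (move v y) - \<psi> v) \<partial>lborel)"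
    using Theta_pos[of "eta v"] by (subst integral_density) (auto simp: Gt_density_def)
  finally have "Theta (eta v) * (\<integral>v'. \<psi> v' - \<psi> v \<partial>k_i \<beta> M \<epsilon> Fi x v)
      = (\<integral>y. (\<psi> (move v y) - \<psi> v) * (Theta (eta v) * Gt_density (eta v) y) \<partial>lborel)"
    by (simp add: mult_ac)
  then show ?thesis
    by (simp add: lambda_i_def Theta_mult_Gt_density mult.assoc)
qed

lemma gain_eq_reversed_loss:
  fixes \<psi> :: "real^'n \<Rightarrow> real"
  assumes [measurable]: "\<psi> \<in> borel_measurable borel"
  shows "(\<integral>p. gauss_weight p * (\<psi> (move (fst p) (snd p)) * max (eta (fst p) + snd p) 0) \<partial>N)
       = (\<integral>p. gauss_weight p * (\<psi> (fst p) * max (- (eta (fst p) + snd p)) 0) \<partial>N)"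
proof -
  have "(\<lambda>p. gauss_weight p * (\<psi> (fst p) * max (- (eta (fst p) + snd p)) 0)) \<in> borel_measurable N"
    by measurable
  from integral_T[OF this] show ?thesis
    by (simp only: T_snd) (simp only: gauss_weight_T T_fst minus_minus)
qed

lemma integral_gauss_weight_drift:
  fixes \<psi> :: "real^'n \<Rightarrow> real"
  assumes "integrable N (\<lambda>p. gauss_weight p * (\<psi> (fst p) * (eta (fst p) + snd p)))"
  shows "(\<integral>p. gauss_weight p * (\<psi> (fst p) * (eta (fst p) + snd p)) \<partial>N)
       = (\<integral>v. rho v * (\<psi> v * eta v) \<partial>lborel)"
proof -
  have std_normal_mean: "(\<integral>y. std_normal_density y * (\<eta> + y) \<partial>lborel) = \<eta>" for \<eta>
  proof -
    have "(\<integral>y. std_normal_density y * (\<eta> + y) \<partial>lborel)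
        = (\<integral>y. \<eta> * std_normal_density y + std_normal_density y * y ^ (2 * 0 + 1) \<partial>lborel)"
      by (simp add: algebra_simps)
    also have "\<dots> = \<eta> * (\<integral>y. std_normal_density y \<partial>lborel) + (\<integral>y. std_normal_density y * y ^ (2 * 0 + 1) \<partial>lborel)"
      by (subst Bochner_Integration.integral_add)
         (auto intro!: Bochner_Integration.integrable_mult_right integrable_normal_moment_nz_1)
    finally show ?thesis using integral_std_normal_moment_odd[of 0] by simp
  qed
  have "(\<integral>p. gauss_weight p * (\<psi> (fst p) * (eta (fst p) + snd p)) \<partial>N)
      = (\<integral>v. (\<integral>y. (rho v * \<psi> v) * (std_normal_density y * (eta v + y)) \<partial>lborel) \<partial>lborel)"
    using lborel_pair.integral_fst'[OF assms] by (simp add: gauss_weight_def mult_ac)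
  then show ?thesis by (simp add: std_normal_mean mult.assoc)
qed

lemma generator_identity:
  fixes \<psi> :: "real^'n \<Rightarrow> real"
  assumes [measurable]: "\<psi> \<in> borel_measurable borel" and \<psi>_bound: "\<And>v. \<bar>\<psi> v\<bar> \<le> B"
  shows "(\<integral>v. rho v * (lambda_i \<beta> M \<epsilon> Fi x v * (\<integral>v'. \<psi> v' - \<psi> v \<partial>k_i \<beta> M \<epsilon> Fi x v)) \<partial>lborel)
       = - \<beta> * (\<integral>v. rho v * (\<psi> v * (F0 \<bullet> v)) \<partial>lborel)"
proof -
  define K where "K = sqrt \<beta> / e * a"
  define s where "s p = eta (fst p) + snd p" for p :: "(real^'n) \<times> real"
  define gain where "gain p = gauss_weight p * (\<psi> (move (fst p) (snd p)) * max (s p) 0)" for p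
  define loss where "loss p = gauss_weight p * (\<psi> (fst p) * max (s p) 0)" for p
  define reversed_loss where "reversed_loss p = gauss_weight p * (\<psi> (fst p) * max (- s p) 0)" for p
  define drift where "drift p = gauss_weight p * (\<psi> (fst p) * s p)" for p
  have [measurable]: "s \<in> borel_measurable N" unfolding s_def by measurable
  have dominated: "\<bar>gauss_weight p * (z * m)\<bar> \<le> B * (gauss_weight p * (\<bar>eta (fst p)\<bar> + \<bar>snd p\<bar>))"
    if "\<bar>z\<bar> \<le> B" "\<bar>m\<bar> \<le> \<bar>s p\<bar>" for p z m
  proof -
    have "\<bar>z * m\<bar> \<le> B * (\<bar>eta (fst p)\<bar> + \<bar>snd p\<bar>)"
      using that \<psi>_bound[of 0] unfolding abs_mult s_def
      by (meson abs_ge_zero abs_triangle_ineq mult_mono order_trans)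
    then show ?thesis using gauss_weight_nonneg[of p]
      by (simp add: abs_mult) (metis mult.left_commute mult_left_mono)
  qed
  have integrable: "integrable N gain" "integrable N loss" "integrable N reversed_loss" "integrable N drift"
    unfolding gain_def loss_def reversed_loss_def drift_def
    by (intro integrable_dominated_by_gauss_weight[where B = B] dominated \<psi>_bound; simp)+
  have gain_minus_loss: "gain (v, y) - loss (v, y)
      = rho v * ((\<psi> (move v y) - \<psi> v) * (max (eta v + y) 0 * std_normal_density y))" for v y
    by (simp add: gain_def loss_def gauss_weight_def s_def algebra_simps)
  have "rho v * (lambda_i \<beta> M \<epsilon> Fi x v * (\<integral>v'. \<psi> v' - \<psi> v \<partial>k_i \<beta> M \<epsilon> Fi x v))
      = K * (\<integral>y. gain (v, y) - loss (v, y) \<partial>lborel)" for v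
    unfolding jump_term_eq[OF assms(1)] gain_minus_loss K_def Bochner_Integration.integral_mult_right_zero
    by (simp add: mult_ac)
  then have "(\<integral>v. rho v * (lambda_i \<beta> M \<epsilon> Fi x v * (\<integral>v'. \<psi> v' - \<psi> v \<partial>k_i \<beta> M \<epsilon> Fi x v)) \<partial>lborel)
      = K * (\<integral>v. (\<integral>y. gain (v, y) - loss (v, y) \<partial>lborel) \<partial>lborel)"
    by simp
  also have "\<dots> = K * (integral\<^sup>L N gain - integral\<^sup>L N loss)"
    using lborel_pair.integral_fst'[OF Bochner_Integration.integrable_diff[OF integrable(1,2)]]
      Bochner_Integration.integral_diff[OF integrable(1,2)] by simp
  also have "integral\<^sup>L N gain = integral\<^sup>L N reversed_loss"
    unfolding gain_def reversed_loss_def s_def by (rule gain_eq_reversed_loss) simp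
  also have "integral\<^sup>L N reversed_loss - integral\<^sup>L N loss = - integral\<^sup>L N drift"
  proof -
    have "reversed_loss p - loss p = - drift p" for p
      using max_def[of "s p" 0] max_def[of "- s p" 0]
      by (auto simp: reversed_loss_def loss_def drift_def algebra_simps)
    then show ?thesis
      using Bochner_Integration.integral_diff[OF integrable(3,2)] by simp
  qed
  also have "integral\<^sup>L N drift = (\<integral>v. rho v * (\<psi> v * eta v) \<partial>lborel)"
    using integral_gauss_weight_drift integrable(4) unfolding drift_def s_def by blast
  also have "K * - (\<integral>v. rho v * (\<psi> v * eta v) \<partial>lborel)
      = - (\<integral>v. \<beta> * (rho v * (\<psi> v * (F0 \<bullet> v))) \<partial>lborel)"
  proof -
    have "K * eta v = \<beta> * (F0 \<bullet> v)" for v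
      using a_pos eps_pos beta_pos by (simp add: K_def eta_eq inner_commute field_simps)
    then have "K * (\<integral>v. rho v * (\<psi> v * eta v) \<partial>lborel) = (\<integral>v. \<beta> * (rho v * (\<psi> v * (F0 \<bullet> v))) \<partial>lborel)"
      by (simp add: mult.left_commute[of K] flip: Bochner_Integration.integral_mult_right_zero)
         (simp add: mult_ac)
    then show ?thesis by simp
  qed
  finally show ?thesis by simp
qed

lemma jump_term_bound:
  fixes \<psi> :: "real^'n \<Rightarrow> real"
  assumes [measurable]: "\<psi> \<in> borel_measurable borel" and \<psi>_bound: "\<And>v. \<bar>\<psi> v\<bar> \<le> B"
  shows "\<bar>lambda_i \<beta> M \<epsilon> Fi x v * (\<integral>v'. \<psi> v' - \<psi> v \<partial>k_i \<beta> M \<epsilon> Fi x v)\<bar>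
       \<le> 2 * B * (\<beta> * \<bar>F0 \<bullet> v\<bar> + sqrt \<beta> * (a / e) * sqrt (2 / pi))"
proof -
  define h where "h y = (\<psi> (move v y) - \<psi> v) * (max (eta v + y) 0 * std_normal_density y)" for y
  define bound where "bound y = 2 * B * (\<bar>eta v\<bar> * std_normal_density y
      + std_normal_density y * \<bar>y\<bar> ^ (2 * 0 + 1))" for y
  have B: "B \<ge> 0" using \<psi>_bound[of 0] by simp
  have integrable_bound: "integrable lborel bound"
    unfolding bound_def
    by (intro Bochner_Integration.integrable_mult_right Bochner_Integration.integrable_add
        integrable_std_normal_moment_abs integrable_normal_density) auto
  have h_le: "\<bar>h y\<bar> \<le> bound y" for y
  proof -
    have "\<bar>\<psi> (move v y) - \<psi> v\<bar> \<le> 2 * B"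
      using \<psi>_bound[of "move v y"] \<psi>_bound[of v] by linarith
    moreover have "\<bar>max (eta v + y) 0\<bar> \<le> \<bar>eta v\<bar> + \<bar>y\<bar>" by simp
    ultimately have "\<bar>h y\<bar> \<le> (2 * B) * ((\<bar>eta v\<bar> + \<bar>y\<bar>) * std_normal_density y)"
      unfolding h_def abs_mult using B by (intro mult_mono mult_right_mono) auto
    then show ?thesis by (simp add: bound_def algebra_simps)
  qed
  have [measurable]: "h \<in> borel_measurable lborel"
    unfolding h_def jump_def eta_i_def by measurable
  have "\<bar>\<integral>y. h y \<partial>lborel\<bar> \<le> integral\<^sup>L lborel bound"
    by (rule order_trans[OF integral_abs_bound integral_mono[OF _ integrable_bound]])
       (auto intro: Bochner_Integration.integrable_bound[OF integrable_bound] simp: h_le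
         order_trans[OF _ abs_ge_self])
  also have "\<dots> = 2 * B * (\<bar>eta v\<bar> + sqrt (2 / pi))"
  proof -
    have "(\<integral>y. \<bar>eta v\<bar> * std_normal_density y + std_normal_density y * \<bar>y\<bar> ^ (2 * 0 + 1) \<partial>lborel)
        = \<bar>eta v\<bar> * (\<integral>y. std_normal_density y \<partial>lborel)
          + (\<integral>y. std_normal_density y * \<bar>y\<bar> ^ (2 * 0 + 1) \<partial>lborel)"
      by (subst Bochner_Integration.integral_add)
         (use integrable_std_normal_moment_abs[of 1] in
           \<open>auto intro!: Bochner_Integration.integrable_mult_right\<close>)
    then show ?thesis
      unfolding bound_def Bochner_Integration.integral_mult_right_zero integral_std_normal_moment_abs_odd
      by simp
  qed
  finally have integral_bound: "\<bar>\<integral>y. h y \<partial>lborel\<bar> \<le> 2 * B * (\<bar>eta v\<bar> + sqrt (2 / pi))" .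
  have K: "sqrt \<beta> / e * a > 0" using a_pos eps_pos beta_pos by simp
  have "\<bar>lambda_i \<beta> M \<epsilon> Fi x v * (\<integral>v'. \<psi> v' - \<psi> v \<partial>k_i \<beta> M \<epsilon> Fi x v)\<bar>
      = sqrt \<beta> / e * a * \<bar>\<integral>y. h y \<partial>lborel\<bar>"
    unfolding jump_term_eq[OF assms(1)] h_def[symmetric] abs_mult[of "sqrt \<beta> / e * a"] abs_of_pos[OF K] ..
  also have "\<dots> \<le> sqrt \<beta> / e * a * (2 * B * (\<bar>eta v\<bar> + sqrt (2 / pi)))"
    using K integral_bound by (intro mult_left_mono) auto
  also have "\<dots> = 2 * B * (\<beta> * \<bar>F0 \<bullet> v\<bar> + sqrt \<beta> * (a / e) * sqrt (2 / pi))"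
    using a_pos eps_pos beta_pos by (simp add: eta_eq abs_mult inner_commute field_simps)
  finally show ?thesis .
qed

end

lemma integral_mu:
  fixes g :: "(real^'n) \<times> (real^'n) \<Rightarrow> real"
  assumes [measurable]: "U \<in> borel_measurable borel" "g \<in> borel_measurable lborel"
  shows "integral\<^sup>L (mu \<beta> U M) g
       = (\<integral>z. exp (- \<beta> * Ham U M z) * g z \<partial>lborel) / (\<integral>z. exp (- \<beta> * Ham U M z) \<partial>lborel)"
proof -
  define Z where "Z = (\<integral>z. exp (- \<beta> * Ham U M z) \<partial>lborel)"
  have "Z \<ge> 0" unfolding Z_def by (rule integral_nonneg_AE) simp
  have "(\<lambda>z. exp (- \<beta> * Ham U M z)) \<in> borel_measurable (lborel \<Otimes>\<^sub>M lborel)"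
    unfolding Ham_def by measurable
  then have [measurable]: "(\<lambda>z. exp (- \<beta> * Ham U M z)) \<in> borel_measurable lborel"
    by (simp add: lborel_prod)
  have "(\<lambda>z. exp (- \<beta> * Ham U M z) / Z) \<in> borel_measurable lborel" by measurable
  then have "integral\<^sup>L (mu \<beta> U M) g = (\<integral>z. (exp (- \<beta> * Ham U M z) / Z) *\<^sub>R g z \<partial>lborel)"
    unfolding mu_def Z_def[symmetric] using \<open>Z \<ge> 0\<close> by (subst integral_density) auto
  then show ?thesis by (simp add: Z_def)
qed

locale jump_generator =
  fixes \<beta> :: real and M :: "real^'n^'n" and U :: "real^'n \<Rightarrow> real"
    and F :: "real^'n \<Rightarrow> real^'n" and \<epsilon> :: "real^'n \<Rightarrow> real"
    and \<phi> :: "(real^'n) \<times> (real^'n) \<Rightarrow> real"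
  assumes beta_pos: "\<beta> > 0" and M_spd: "sym_posdef M"
    and U_cont: "continuous_on UNIV U" and U_int: "integrable lborel (\<lambda>x. exp (- \<beta> * U x))"
    and F_cont: "continuous_on UNIV F" and F_nonzero: "\<And>x. F x \<noteq> 0"
    and eps_cont: "continuous_on UNIV \<epsilon>" and eps_pos: "\<And>x. \<epsilon> x > 0"
    and phi_cont: "continuous_on UNIV \<phi>" and phi_supp: "compact_support \<phi>"
begin

lemma velocity_jump_at: "velocity_jump \<beta> M \<epsilon> F x"
  using beta_pos M_spd eps_pos F_nonzero by unfold_locales

abbreviation "boltzmann z \<equiv> exp (- \<beta> * Ham U M z)"
abbreviation "jump_term z \<equiv> lambda_i \<beta> M \<epsilon> F (fst z) (snd z)
    * (\<integral>v'. \<phi> (fst z, v') - \<phi> z \<partial>k_i \<beta> M \<epsilon> F (fst z) (snd z))"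
abbreviation "flux z \<equiv> \<phi> z * (F (fst z) \<bullet> snd z)"

lemma U_measurable[measurable]: "U \<in> borel_measurable borel"
  by (rule borel_measurable_continuous_onI[OF U_cont])

lemma F_measurable[measurable]: "F \<in> borel_measurable borel"
  by (rule borel_measurable_continuous_onI[OF F_cont])

lemma eps_measurable[measurable]: "\<epsilon> \<in> borel_measurable borel"
  by (rule borel_measurable_continuous_onI[OF eps_cont])

lemma phi_measurable[measurable]: "\<phi> \<in> borel_measurable (lborel \<Otimes>\<^sub>M lborel)"
  using borel_measurable_continuous_onI[OF phi_cont] by (simp add: lborel_prod)

lemma phi_slice_measurable[measurable]: "(\<lambda>v. \<phi> (x, v)) \<in> borel_measurable borel"
  using phi_measurable by (simp add: lborel_prod)

definition "x_support = fst ` closure {z. \<phi> z \<noteq> 0}"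

lemma compact_x_support: "compact x_support"
  using phi_supp unfolding x_support_def compact_support_def
  by (intro compact_continuous_image continuous_intros)

lemma phi_outside_x_support: "x \<notin> x_support \<Longrightarrow> \<phi> (x, v) = 0"
  using closure_subset[of "{z. \<phi> z \<noteq> 0}"] by (force simp: x_support_def)

lemma phi_bounded: obtains B where "\<And>z. \<bar>\<phi> z\<bar> \<le> B"
proof -
  have "bounded (\<phi> ` closure {z. \<phi> z \<noteq> 0})"
    using phi_supp unfolding compact_support_def
    by (intro compact_imp_bounded compact_continuous_image continuous_on_subset[OF phi_cont]) auto
  then obtain B where "\<And>z. z \<in> closure {z. \<phi> z \<noteq> 0} \<Longrightarrow> \<bar>\<phi> z\<bar> \<le> B"
    unfolding bounded_iff by fastforce
  then have "\<bar>\<phi> z\<bar> \<le> max B 0" for z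
    using closure_subset[of "{z. \<phi> z \<noteq> 0}"] by (cases "\<phi> z = 0") (simp, fastforce)
  then show ?thesis using that by blast
qed

lemma bounded_on_x_support:
  assumes "continuous_on UNIV f"
  obtains C where "\<And>x. x \<in> x_support \<Longrightarrow> norm (f x) \<le> C"
  using compact_imp_bounded[OF compact_continuous_image[OF continuous_on_subset[OF assms] compact_x_support]]
  unfolding bounded_iff by fastforce

lemma jump_term_explicit:
  "jump_term z = sqrt \<beta> / \<epsilon> (fst z) * norm_Minvhalf M (F (fst z))
     * (\<integral>y. (\<phi> (fst z, jump \<beta> M \<epsilon> F (fst z) (snd z) y) - \<phi> z)
           * (max (eta_i \<beta> M \<epsilon> F (fst z) (snd z) + y) 0 * std_normal_density y) \<partial>lborel)"
  using velocity_jump.jump_term_eq[OF velocity_jump_at phi_slice_measurable[of "fst z"], where v = "snd z"]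
  by simp

lemma jump_term_measurable[measurable]: "jump_term \<in> borel_measurable lborel"
proof -
  have "(\<lambda>(z, y). (\<phi> (fst z, jump \<beta> M \<epsilon> F (fst z) (snd z) y) - \<phi> z)
        * (max (eta_i \<beta> M \<epsilon> F (fst z) (snd z) + y) 0 * std_normal_density y))
      \<in> borel_measurable ((lborel \<Otimes>\<^sub>M lborel) \<Otimes>\<^sub>M lborel)"
    unfolding jump_def eta_i_def norm_Minvhalf_def by measurable
  then have "(\<lambda>z. \<integral>y. (\<phi> (fst z, jump \<beta> M \<epsilon> F (fst z) (snd z) y) - \<phi> z)
        * (max (eta_i \<beta> M \<epsilon> F (fst z) (snd z) + y) 0 * std_normal_density y) \<partial>lborel)
      \<in> borel_measurable (lborel \<Otimes>\<^sub>M lborel)"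
    by (rule lborel.borel_measurable_lebesgue_integral)
  then have "jump_term \<in> borel_measurable (lborel \<Otimes>\<^sub>M lborel)"
    unfolding jump_term_explicit norm_Minvhalf_def by measurable
  then show ?thesis by (simp add: lborel_prod)
qed

lemma jump_term_dominated:
  obtains C where "\<And>z. \<bar>jump_term z\<bar> \<le> C * (indicator x_support (fst z) * (1 + norm (snd z)))"
proof -
  obtain B where B: "\<And>z. \<bar>\<phi> z\<bar> \<le> B" using phi_bounded by blast
  obtain CF where CF: "\<And>x. x \<in> x_support \<Longrightarrow> norm (F x) \<le> CF"
    using bounded_on_x_support[OF F_cont] by blast
  have "continuous_on UNIV (\<lambda>x. matrix_inv M *v F x)"
    by (rule continuous_on_compose2[OF linear_continuous_on[OF matrix_vector_mul_bounded_linear] F_cont])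
       auto
  then have "continuous_on UNIV (\<lambda>x. norm_Minvhalf M (F x) / \<epsilon> x)"
    unfolding norm_Minvhalf_def using eps_pos
    by (intro continuous_intros F_cont eps_cont) (auto simp: less_imp_neq[symmetric])
  then obtain Ca where Ca: "\<And>x. x \<in> x_support \<Longrightarrow> norm (norm_Minvhalf M (F x) / \<epsilon> x) \<le> Ca"
    using bounded_on_x_support by blast
  define C where "C = 2 * B * (\<beta> * CF + sqrt \<beta> * Ca * sqrt (2 / pi))"
  have "\<bar>jump_term (x, v)\<bar> \<le> C * (indicator x_support x * (1 + norm v))" for x v
  proof (cases "x \<in> x_support")
    case True
    interpret velocity_jump \<beta> M \<epsilon> F x by (rule velocity_jump_at)
    have B0: "B \<ge> 0" using B[of 0] by simp
    have "CF \<ge> 0" "Ca \<ge> 0"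
      using CF[OF True] Ca[OF True] norm_ge_zero order_trans by blast+
    then have "CF * norm v \<le> CF * (1 + norm v)" "Ca \<le> Ca * (1 + norm v)"
      by (simp_all add: algebra_simps)
    moreover have "\<bar>F x \<bullet> v\<bar> \<le> CF * norm v"
      using Cauchy_Schwarz_ineq2[of "F x" v] CF[OF True] by (meson mult_right_mono norm_ge_zero order_trans)
    moreover have "a / e \<le> Ca" using Ca[OF True] a_pos eps_pos by simp
    ultimately have "\<bar>F x \<bullet> v\<bar> \<le> CF * (1 + norm v)" "a / e \<le> Ca * (1 + norm v)"
      by linarith+
    then have "\<beta> * \<bar>F x \<bullet> v\<bar> \<le> \<beta> * (CF * (1 + norm v))"
      and "sqrt \<beta> * (a / e) * sqrt (2 / pi) \<le> sqrt \<beta> * (Ca * (1 + norm v)) * sqrt (2 / pi)"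
      using beta_pos by (intro mult_left_mono mult_right_mono; simp)+
    then have "\<beta> * \<bar>F x \<bullet> v\<bar> + sqrt \<beta> * (a / e) * sqrt (2 / pi)
        \<le> (\<beta> * CF + sqrt \<beta> * Ca * sqrt (2 / pi)) * (1 + norm v)"
      by (simp add: algebra_simps)
    then have "2 * B * (\<beta> * \<bar>F x \<bullet> v\<bar> + sqrt \<beta> * (a / e) * sqrt (2 / pi))
        \<le> 2 * B * ((\<beta> * CF + sqrt \<beta> * Ca * sqrt (2 / pi)) * (1 + norm v))"
      using B0 by (intro mult_left_mono) simp_all
    moreover have "\<bar>jump_term (x, v)\<bar> \<le> 2 * B * (\<beta> * \<bar>F x \<bullet> v\<bar> + sqrt \<beta> * (a / e) * sqrt (2 / pi))"
      using jump_term_bound[OF phi_slice_measurable[of x] B, of v] by simp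
    ultimately show ?thesis using True by (simp add: C_def mult.assoc)
  qed (simp add: phi_outside_x_support)
  then show ?thesis using that by (metis prod.collapse)
qed

lemma flux_dominated:
  obtains C where "\<And>z. \<bar>flux z\<bar> \<le> C * (indicator x_support (fst z) * (1 + norm (snd z)))"
proof -
  obtain B where B: "\<And>z. \<bar>\<phi> z\<bar> \<le> B" using phi_bounded by blast
  obtain CF where CF: "\<And>x. x \<in> x_support \<Longrightarrow> norm (F x) \<le> CF"
    using bounded_on_x_support[OF F_cont] by blast
  have "\<bar>flux (x, v)\<bar> \<le> (B * CF) * (indicator x_support x * (1 + norm v))" for x v
  proof (cases "x \<in> x_support")
    case True
    have "\<bar>F x \<bullet> v\<bar> \<le> norm (F x) * norm v" by (rule Cauchy_Schwarz_ineq2)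
    also have "\<dots> \<le> CF * (1 + norm v)"
      using CF[OF True] order_trans[OF norm_ge_zero CF[OF True]] by (intro mult_mono) auto
    finally have "\<bar>flux (x, v)\<bar> \<le> B * (CF * (1 + norm v))"
      unfolding abs_mult fst_conv snd_conv using B order_trans[OF abs_ge_zero B] by (intro mult_mono) auto
    then show ?thesis using True by (simp add: mult_ac)
  qed (simp add: phi_outside_x_support)
  then show ?thesis using that by (metis prod.collapse)
qed

lemma integrable_boltzmann_dominated:
  fixes f :: "(real^'n) \<times> (real^'n) \<Rightarrow> real"
  assumes [measurable]: "f \<in> borel_measurable lborel"
    and f_le: "\<And>z. \<bar>f z\<bar> \<le> C * (indicator x_support (fst z) * (1 + norm (snd z)))"
  shows "integrable lborel (\<lambda>z. boltzmann z * f z)"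
proof -
  define dom where "dom z = C * ((indicator x_support (fst z) * exp (- \<beta> * U (fst z)))
      * ((1 + norm (snd z)) * maxwellian \<beta> M (snd z)))" for z
  have "integrable lborel (\<lambda>x. indicator x_support x * exp (- \<beta> * U x))"
    using integrable_mult_indicator[OF _ U_int, of x_support] compact_x_support
    by (simp add: borel_compact)
  then have "integrable (lborel \<Otimes>\<^sub>M lborel) dom"
    unfolding dom_def
    by (intro Bochner_Integration.integrable_mult_right integrable_lborel_pair_mult
        integrable_maxwellian_moment1 beta_pos M_spd)
  then have "integrable lborel dom" by (simp add: lborel_prod)
  moreover have "norm (boltzmann z * f z) \<le> norm (dom z)" for z
  proof -
    obtain x v where z: "z = (x, v)" by (cases z)
    have "\<bar>boltzmann z * f z\<bar> = boltzmann z * \<bar>f z\<bar>" by (simp add: abs_mult)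
    also have "\<dots> \<le> boltzmann z * (C * (indicator x_support x * (1 + norm v)))"
      using f_le[of z] by (intro mult_left_mono) (simp_all add: z)
    also have "\<dots> = dom z" unfolding dom_def z Ham_split by (simp add: mult_ac)
    finally show ?thesis unfolding real_norm_def using abs_ge_self[of "dom z"] by linarith
  qed
  moreover have "(\<lambda>z. boltzmann z * f z) \<in> borel_measurable lborel"
  proof -
    have "(\<lambda>z. boltzmann z) \<in> borel_measurable (lborel \<Otimes>\<^sub>M lborel)"
      unfolding Ham_def by measurable
    then show ?thesis by (simp add: lborel_prod)
  qed
  ultimately show ?thesis
    by (blast intro: Bochner_Integration.integrable_bound[of lborel dom] AE_I2)
qed

lemma flux_measurable[measurable]: "flux \<in> borel_measurable lborel"
proof -
  have "flux \<in> borel_measurable (lborel \<Otimes>\<^sub>M lborel)" by measurable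
  then show ?thesis by (simp add: lborel_prod)
qed

lemma boltzmann_generator_identity:
  "(\<integral>z. boltzmann z * jump_term z \<partial>lborel) = - \<beta> * (\<integral>z. boltzmann z * flux z \<partial>lborel)"
proof -
  obtain C1 where C1: "\<And>z. \<bar>jump_term z\<bar> \<le> C1 * (indicator x_support (fst z) * (1 + norm (snd z)))"
    using jump_term_dominated by blast
  obtain C2 where C2: "\<And>z. \<bar>flux z\<bar> \<le> C2 * (indicator x_support (fst z) * (1 + norm (snd z)))"
    using flux_dominated by blast
  obtain B where B: "\<And>z. \<bar>\<phi> z\<bar> \<le> B" using phi_bounded by blast
  have fibre: "(\<integral>v. boltzmann (x, v) * jump_term (x, v) \<partial>lborel)
      = - \<beta> * (\<integral>v. boltzmann (x, v) * flux (x, v) \<partial>lborel)" for x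
    unfolding Ham_split mult.assoc Bochner_Integration.integral_mult_right_zero
    using velocity_jump.generator_identity[OF velocity_jump_at[of x] phi_slice_measurable[of x] B]
    by simp
  have "(\<integral>z. boltzmann z * jump_term z \<partial>lborel)
      = (\<integral>x. (\<integral>v. boltzmann (x, v) * jump_term (x, v) \<partial>lborel) \<partial>lborel)"
    using lborel_pair.integral_fst'[of "\<lambda>z. boltzmann z * jump_term z"]
      integrable_boltzmann_dominated[OF jump_term_measurable C1] by (simp add: lborel_prod)
  also have "\<dots> = - \<beta> * (\<integral>x. (\<integral>v. boltzmann (x, v) * flux (x, v) \<partial>lborel) \<partial>lborel)"
    by (simp only: fibre Bochner_Integration.integral_mult_right_zero)
  also have "(\<integral>x. (\<integral>v. boltzmann (x, v) * flux (x, v) \<partial>lborel) \<partial>lborel)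
      = (\<integral>z. boltzmann z * flux z \<partial>lborel)"
    using lborel_pair.integral_fst'[of "\<lambda>z. boltzmann z * flux z"]
      integrable_boltzmann_dominated[OF flux_measurable C2] by (simp add: lborel_prod)
  finally show ?thesis .
qed

lemma mu_generator_identity:
  "(\<integral>z. jump_term z \<partial>mu \<beta> U M) = - \<beta> * (\<integral>z. flux z \<partial>mu \<beta> U M)"
  unfolding integral_mu[OF U_measurable jump_term_measurable]
    integral_mu[OF U_measurable flux_measurable] boltzmann_generator_identity
  by simp

end

theorem mainTheorem2:
  fixes \<beta> :: real and M :: "real^'n^'n" and U :: "real^'n \<Rightarrow> real"
    and K :: nat and F :: "nat \<Rightarrow> real^'n \<Rightarrow> real^'n" and \<epsilon> :: "real^'n \<Rightarrow> real"
    and i :: nat and \<phi> :: "(real^'n) \<times> (real^'n) \<Rightarrow> real"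
  assumes beta_pos: "\<beta> > 0"
    and M_spd: "sym_posdef M"
    and U_smooth: "smooth_fun U"
    and U_int: "integrable lborel (\<lambda>x. exp (- \<beta> * U x))"
    and gradU: "\<And>x. (U has_derivative (\<lambda>h. (\<Sum>j\<le>K. F j x) \<bullet> h)) (at x)"
    and F_cont: "\<And>j. j \<le> K \<Longrightarrow> continuous_on UNIV (F j)"
    and F_nonzero: "\<And>j x. 1 \<le> j \<Longrightarrow> j \<le> K \<Longrightarrow> F j x \<noteq> 0"
    and eps_cont: "continuous_on UNIV \<epsilon>"
    and eps_pos: "\<And>x. \<epsilon> x > 0"
    and i_range: "i \<in> {1..K}"
    and phi: "Cc_inf \<phi>"
  shows "(\<integral>z. lambda_i \<beta> M \<epsilon> (F i) (fst z) (snd z) *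
             (\<integral>v'. \<phi> (fst z, v') - \<phi> z \<partial>(k_i \<beta> M \<epsilon> (F i) (fst z) (snd z)))
          \<partial>(mu \<beta> U M))
       = - \<beta> * (\<integral>z. \<phi> z * (F i (fst z) \<bullet> snd z) \<partial>(mu \<beta> U M))"
proof -
  have "continuous_on UNIV U"
    by (intro continuous_at_imp_continuous_on ballI has_derivative_continuous[OF gradU])
  moreover have "Ck 0 \<phi>" "compact_support \<phi>"
    using phi by (simp_all add: Cc_inf_def smooth_fun_def)
  moreover have "continuous_on UNIV (F i)" "\<And>x. F i x \<noteq> 0"
    using F_cont F_nonzero i_range by auto
  ultimately interpret jump_generator \<beta> M U "F i" \<epsilon> \<phi>
    using beta_pos M_spd U_int eps_cont eps_pos by unfold_locales simp_all
  show ?thesis by (rule mu_generator_identity)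
qed

end
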